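(* Let $\mathcal P$ be a compact parameter set with probability distribution $\mathbb P$, and for each $P\in\mathcal P$ let the quadratic program $J^*(P)=\min_U\{p(P;U): H(P)U\le h(P)\}$ be feasible with finite optimal value, with $p(P;U):=\tfrac12 U^\top Q(P)U+c(P)^\top U$ and dual function $d(P;\lambda)$. Let $\tilde U$ and $\tilde\lambda$ be fixed maps on $\mathcal P$ (independent of the verification samples). Given $\epsilon\in(0,1)$, $\beta\in(0,1)$, $\gamma>0$, choose $\epsilon_p,\epsilon_d>0$ with $\epsilon_p+\epsilon_d=\epsilon$, $\beta_p,\beta_d>0$ with $\beta_p+\beta_d=\beta$, $\gamma_p,\gamma_d>0$ with $\gamma_p+\gamma_d=\gamma$, and integers $N_p\ge \ln(1/\beta_p)/\ln(1/(1-\epsilon_p))$, $N_d\ge \ln(1/\beta_d)/\ln(1/(1-\epsilon_d))$. Draw independent samples $P^{(1)},\dots,P^{(N_p)}$ (primal) and $\bar P^{(1)},\dots,\bar P^{(N_d)}$ (dual), all i.i.d. according to $\mathbb P$. Then, with probability at least $1-\beta$ over these samples, the following holds: if $$H(P^{(i)})\tilde U(P^{(i)})\le h(P^{(i)}),\quad p(P^{(i)};\tilde U(P^{(i)}))\le J^*(P^{(i)})+\gamma_p\quad (i=1,\dots,N_p)$$ and $$\tilde\lambda(\bar P^{(j)})\ge0,\quad d(\bar P^{(j)};\tilde\lambda(\bar P^{(j)}))\ge J^*(\bar P^{(j)})-\gamma_d\quad (j=1,\dots,N_d),$$ then $$\mathbb P\big[\,H(P)\tilde U(P)\le h(P),\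 \tilde\lambda(P)\ge0,\ p(P;\tilde U(P))-d(P;\tilde\lambda(P))\le\gamma\,\big]\ \ge\ 1-\epsilon.$$
   Context: $Q(P)$ is symmetric positive definite, $c(P)$ a vector, $H(P),h(P)$ a matrix and vector of compatible dimensions; inequalities are componentwise. The dual function is $d(P;\lambda):=\inf_U\{p(P;U)+\lambda^\top(H(P)U-h(P))\}=-\tfrac12 (c(P)+H(P)^\top\lambda)^\top Q(P)^{-1}(c(P)+H(P)^\top\lambda)-\lambda^\top h(P)$ for $\lambda\ge0$. In the paper $\tilde U$ is a learned approximation of the MPC optimizer (primal policy) and $\tilde\lambda$ a learned approximation of the optimal dual multiplier (dual policy). *)

theory Defs
  imports "HOL-Analysis.Analysis" "HOL-Probability.Probability"
begin

text \<open>Componentwise order on real^'n is the library order on vec.\<close>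

definition sym_pos_def :: "real^'n^'n \<Rightarrow> bool" where
  "sym_pos_def Q \<longleftrightarrow> transpose Q = Q \<and> (\<forall>x. x \<noteq> 0 \<longrightarrow> 0 < x \<bullet> (Q *v x))"

definition qp_obj :: "real^'n^'n \<Rightarrow> real^'n \<Rightarrow> real^'n \<Rightarrow> real" where
  "qp_obj Q c U = (1/2) * (U \<bullet> (Q *v U)) + c \<bullet> U"

definition qp_opt :: "real^'n^'n \<Rightarrow> real^'n \<Rightarrow> real^'n^'m \<Rightarrow> real^'m \<Rightarrow> real" where
  "qp_opt Q c H h = Inf (qp_obj Q c ` {U. H *v U \<le> h})"

text \<open>Dual function (closed form, for lambda >= 0).\<close>
definition qp_dual :: "real^'n^'n \<Rightarrow> real^'n \<Rightarrow> real^'n^'m \<Rightarrow> real^'m \<Rightarrow> real^'m \<Rightarrow> real" where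
  "qp_dual Q c H h l =
     - (1/2) * ((c + transpose H *v l) \<bullet> (matrix_inv Q *v (c + transpose H *v l))) - l \<bullet> h"

end

theory Submission
  imports Defs
begin

text \<open>The primal samples certify the set A of parameters where the primal policy is feasible
and \<open>\<gamma>\<^sub>p\<close>-suboptimal, the dual samples the set B where the dual policy is nonnegative and
\<open>\<gamma>\<^sub>d\<close>-suboptimal; on A \<inter> B the duality gap of the two policies is at most
\<open>\<gamma>\<^sub>p + \<gamma>\<^sub>d = \<gamma>\<close>, because both are measured against the same J*. If the gap set had
probability below \<open>1 - \<epsilon>\<close>, then by the union bound A would have probability below
\<open>1 - \<epsilon>\<^sub>p\<close> or B below \<open>1 - \<epsilon>\<^sub>d\<close>, and all \<open>N\<^sub>p\<close> (resp. \<open>N\<^sub>d\<close>) independent samples land in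
that set with probability at most \<open>(1 - \<epsilon>\<^sub>p)^N\<^sub>p \<le> \<beta>\<^sub>p\<close> (resp. \<open>(1 - \<epsilon>\<^sub>d)^N\<^sub>d \<le> \<beta>\<^sub>d\<close>).\<close>

lemma power_one_minus_le_of_sample_bound:
  fixes e b :: real and N :: nat
  assumes "0 < e" "e < 1" "0 < b" and N: "real N \<ge> ln (1 / b) / ln (1 / (1 - e))"
  shows "(1 - e) ^ N \<le> b"
proof -
  have "ln (1 / (1 - e)) > 0" using assms by simp
  then have "ln (1 / b) \<le> real N * ln (1 / (1 - e))"
    using N by (simp add: divide_le_eq)
  then have "ln ((1 - e) ^ N) \<le> ln b"
    using assms by (simp add: ln_div ln_realpow)
  then show ?thesis using assms by simp
qed

lemma (in prob_space) prob_Int_ge: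
  assumes "A \<in> events" "B \<in> events"
  shows "prob A + prob B - 1 \<le> prob (A \<inter> B)"
proof -
  have "prob (A \<union> B) + prob (A \<inter> B) = prob A + prob B"
    using measure_Un3[of A M B] assms by (simp add: fmeasurable_eq_sets)
  then show ?thesis using prob_le_1[of "A \<union> B"] by linarith
qed

lemma (in prob_space) prob_PiE_const:
  assumes "finite I" "A \<in> events"
  shows "measure (PiM I (\<lambda>_. M)) (Pi\<^sub>E I (\<lambda>_. A)) = prob A ^ card I"
proof -
  interpret finite_product_prob_space "\<lambda>_. M" I
    by unfold_locales (rule assms(1))
  show ?thesis using prob_times[of "\<lambda>_. A"] assms(2) by simp
qed

lemma (in prob_space) prob_all_samples_in_le:
  assumes "A \<in> events" "prob A \<le> 1 - e"
    and "0 < e" "e < 1" "0 < b" "real N \<ge> ln (1 / b) / ln (1 / (1 - e))"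
  shows "measure (PiM {..<N} (\<lambda>_. M)) (Pi\<^sub>E {..<N} (\<lambda>_. A)) \<le> b"
proof -
  have "prob A ^ N \<le> (1 - e) ^ N"
    using assms(2) by (intro power_mono) auto
  also have "\<dots> \<le> b"
    using assms(3-) by (rule power_one_minus_le_of_sample_bound)
  finally show ?thesis using prob_PiE_const[of "{..<N}" A] assms(1) by simp
qed

lemma measure_pair_measure_Times:
  assumes "finite_measure M1" "finite_measure M2" "X \<in> sets M1" "Y \<in> sets M2"
  shows "measure (M1 \<Otimes>\<^sub>M M2) (X \<times> Y) = measure M1 X * measure M2 Y"
proof -
  interpret M1: finite_measure M1 by (rule assms(1))
  interpret M2: finite_measure M2 by (rule assms(2))
  interpret pair_sigma_finite M1 M2 ..
  show ?thesis
    unfolding measure_def M2.emeasure_pair_measure_Times[OF assms(3,4)] by (rule enn2real_mult)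
qed

lemma (in prob_space) two_sample_certificate:
  fixes Np Nd :: nat
  defines "S \<equiv> PiM {..<Np} (\<lambda>_. M) \<Otimes>\<^sub>M PiM {..<Nd} (\<lambda>_. M)"
  assumes sets: "A \<in> events" "B \<in> events" "G \<in> events" and ABG: "A \<inter> B \<subseteq> G"
    and ep: "0 < ep" "ep < 1" and ed: "0 < ed" "ed < 1" and "0 < bp" "0 < bd"
    and Np: "real Np \<ge> ln (1 / bp) / ln (1 / (1 - ep))"
    and Nd: "real Nd \<ge> ln (1 / bd) / ln (1 / (1 - ed))"
  shows "measure S {(xs, ys) \<in> space S. (\<forall>i<Np. xs i \<in> A) \<and> (\<forall>j<Nd. ys j \<in> B)
            \<longrightarrow> 1 - (ep + ed) \<le> prob G} \<ge> 1 - (bp + bd)"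
proof -
  interpret S: prob_space S
    unfolding S_def by (intro prob_space_pair prob_space_PiM prob_space_axioms)
  show ?thesis
  proof (cases "1 - (ep + ed) \<le> prob G")
    case True
    then show ?thesis using \<open>0 < bp\<close> \<open>0 < bd\<close> by (simp add: S.prob_space)
  next
    case False
    define XA where "XA = Pi\<^sub>E {..<Np} (\<lambda>_. A)"
    define YB where "YB = Pi\<^sub>E {..<Nd} (\<lambda>_. B)"
    let ?M1 = "PiM {..<Np} (\<lambda>_. M)" and ?M2 = "PiM {..<Nd} (\<lambda>_. M)"
    have XA: "XA \<in> sets ?M1" and YB: "YB \<in> sets ?M2"
      unfolding XA_def YB_def using sets by (auto intro!: sets_PiM_I_finite)
    have mem_XA_YB:
      "(xs, ys) \<in> XA \<times> YB \<longleftrightarrow> (\<forall>i<Np. xs i \<in> A) \<and> (\<forall>j<Nd. ys j \<in> B)"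
      if "(xs, ys) \<in> space S" for xs ys
      using that by (auto simp: S_def XA_def YB_def space_pair_measure space_PiM PiE_iff)
    have "prob (A \<inter> B) \<le> prob G"
      using ABG sets by (intro finite_measure_mono)
    then have "prob A < 1 - ep \<or> prob B < 1 - ed"
      using prob_Int_ge[OF sets(1,2)] False by linarith
    then have "measure ?M1 XA * measure ?M2 YB \<le> bp + bd"
    proof
      assume "prob A < 1 - ep"
      then have "measure ?M1 XA \<le> bp"
        unfolding XA_def using sets ep \<open>0 < bp\<close> Np by (intro prob_all_samples_in_le) auto
      moreover have "measure ?M2 YB \<le> 1"
        by (rule prob_space.prob_le_1) (intro prob_space_PiM prob_space_axioms)
      ultimately have "measure ?M1 XA * measure ?M2 YB \<le> bp * 1"
        using \<open>0 < bp\<close> by (intro mult_mono) auto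
      then show ?thesis using \<open>0 < bd\<close> by simp
    next
      assume "prob B < 1 - ed"
      then have "measure ?M2 YB \<le> bd"
        unfolding YB_def using sets ed \<open>0 < bd\<close> Nd by (intro prob_all_samples_in_le) auto
      moreover have "measure ?M1 XA \<le> 1"
        by (rule prob_space.prob_le_1) (intro prob_space_PiM prob_space_axioms)
      ultimately have "measure ?M1 XA * measure ?M2 YB \<le> 1 * bd"
        by (intro mult_mono) auto
      then show ?thesis using \<open>0 < bp\<close> by simp
    qed
    moreover have "measure S (XA \<times> YB) = measure ?M1 XA * measure ?M2 YB"
      unfolding S_def using XA YB
      by (intro measure_pair_measure_Times prob_space.finite_measure prob_space_PiM prob_space_axioms)
    moreover have "{(xs, ys) \<in> space S. (\<forall>i<Np. xs i \<in> A) \<and> (\<forall>j<Nd. ys j \<in> B)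
              \<longrightarrow> 1 - (ep + ed) \<le> prob G} = space S - XA \<times> YB"
      using False mem_XA_YB by blast
    moreover have "XA \<times> YB \<in> S.events"
      unfolding S_def using XA YB by simp
    ultimately show ?thesis using S.prob_compl by simp
  qed
qed

theorem theorem1:
  fixes M :: "'p::topological_space measure"
    and Q :: "'p \<Rightarrow> real^'n^'n" and c :: "'p \<Rightarrow> real^'n"
    and H :: "'p \<Rightarrow> real^'n^'m" and h :: "'p \<Rightarrow> real^'m"
    and Ut :: "'p \<Rightarrow> real^'n" and lt :: "'p \<Rightarrow> real^'m"
    and \<epsilon> \<beta> \<gamma> \<epsilon>p \<epsilon>d \<beta>p \<beta>d \<gamma>p \<gamma>d :: real and Np Nd :: nat
  assumes PS: "prob_space M" and cpt: "compact (space M)"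
    and Qpd: "\<And>P. P \<in> space M \<Longrightarrow> sym_pos_def (Q P)"
    and feas: "\<And>P. P \<in> space M \<Longrightarrow> {U. H P *v U \<le> h P} \<noteq> {}"
    and finite_opt: "\<And>P. P \<in> space M \<Longrightarrow> bdd_below (qp_obj (Q P) (c P) ` {U. H P *v U \<le> h P})"
    and meas_p: "{P \<in> space M. H P *v Ut P \<le> h P \<and>
                   qp_obj (Q P) (c P) (Ut P) \<le> qp_opt (Q P) (c P) (H P) (h P) + \<gamma>p} \<in> sets M"
    and meas_d: "{P \<in> space M. 0 \<le> lt P \<and>
                   qp_dual (Q P) (c P) (H P) (h P) (lt P) \<ge> qp_opt (Q P) (c P) (H P) (h P) - \<gamma>d} \<in> sets M"
    and meas_g: "{P \<in> space M. H P *v Ut P \<le> h P \<and> 0 \<le> lt P \<and>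
                   qp_obj (Q P) (c P) (Ut P) - qp_dual (Q P) (c P) (H P) (h P) (lt P) \<le> \<gamma>} \<in> sets M"
    and eps: "0 < \<epsilon>" "\<epsilon> < 1" and bet: "0 < \<beta>" "\<beta> < 1" and gam: "0 < \<gamma>"
    and epsd: "0 < \<epsilon>p" "0 < \<epsilon>d" "\<epsilon>p + \<epsilon>d = \<epsilon>"
    and betd: "0 < \<beta>p" "0 < \<beta>d" "\<beta>p + \<beta>d = \<beta>"
    and gamd: "0 < \<gamma>p" "0 < \<gamma>d" "\<gamma>p + \<gamma>d = \<gamma>"
    and Np: "real Np \<ge> ln (1 / \<beta>p) / ln (1 / (1 - \<epsilon>p))"
    and Nd: "real Nd \<ge> ln (1 / \<beta>d) / ln (1 / (1 - \<epsilon>d))"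
  shows "measure (PiM {..<Np} (\<lambda>_. M) \<Otimes>\<^sub>M PiM {..<Nd} (\<lambda>_. M))
     {(xs, ys) \<in> space (PiM {..<Np} (\<lambda>_. M) \<Otimes>\<^sub>M PiM {..<Nd} (\<lambda>_. M)).
        ((\<forall>i<Np. H (xs i) *v Ut (xs i) \<le> h (xs i) \<and>
            qp_obj (Q (xs i)) (c (xs i)) (Ut (xs i))
              \<le> qp_opt (Q (xs i)) (c (xs i)) (H (xs i)) (h (xs i)) + \<gamma>p) \<and>
         (\<forall>j<Nd. 0 \<le> lt (ys j) \<and>
            qp_dual (Q (ys j)) (c (ys j)) (H (ys j)) (h (ys j)) (lt (ys j))
              \<ge> qp_opt (Q (ys j)) (c (ys j)) (H (ys j)) (h (ys j)) - \<gamma>d))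
        \<longrightarrow> measure M {P \<in> space M. H P *v Ut P \<le> h P \<and> 0 \<le> lt P \<and>
               qp_obj (Q P) (c P) (Ut P) - qp_dual (Q P) (c P) (H P) (h P) (lt P) \<le> \<gamma>} \<ge> 1 - \<epsilon>}
     \<ge> 1 - \<beta>"
    (is "?lhs \<ge> _")
proof -
  interpret prob_space M by (rule PS)
  let ?A = "{P \<in> space M. H P *v Ut P \<le> h P \<and>
              qp_obj (Q P) (c P) (Ut P) \<le> qp_opt (Q P) (c P) (H P) (h P) + \<gamma>p}"
  let ?B = "{P \<in> space M. 0 \<le> lt P \<and>
              qp_dual (Q P) (c P) (H P) (h P) (lt P) \<ge> qp_opt (Q P) (c P) (H P) (h P) - \<gamma>d}"
  let ?G = "{P \<in> space M. H P *v Ut P \<le> h P \<and> 0 \<le> lt P \<and>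
              qp_obj (Q P) (c P) (Ut P) - qp_dual (Q P) (c P) (H P) (h P) (lt P) \<le> \<gamma>}"
  let ?S = "PiM {..<Np} (\<lambda>_. M) \<Otimes>\<^sub>M PiM {..<Nd} (\<lambda>_. M)"
  have "?A \<inter> ?B \<subseteq> ?G" using gamd(3) by auto
  then have "1 - (\<beta>p + \<beta>d) \<le> measure ?S {(xs, ys) \<in> space ?S.
        (\<forall>i<Np. xs i \<in> ?A) \<and> (\<forall>j<Nd. ys j \<in> ?B) \<longrightarrow> 1 - (\<epsilon>p + \<epsilon>d) \<le> prob ?G}"
    (is "_ \<le> measure _ ?T")
    using meas_p meas_d meas_g epsd eps betd Np Nd
    by (intro two_sample_certificate) auto
  moreover have "?lhs = measure ?S ?T"
    using epsd(3)
    by (intro arg_cong[where f = "measure ?S"] set_eqI)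
      (auto simp: space_pair_measure space_PiM PiE_iff)
  ultimately show ?thesis using betd(3) by simp
qed

end
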